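(* Let $A\subset\mathbb{R}$ be a finite convex set and $B\subset\mathbb{R}$ any finite set. Then, for either choice of sign, \[ E_3(A,B):=\sum_x r_{A\pm B}^3(x)\ll |A||B|^2\log|A|, \] and for every $1<p<2$, \[ E_{1+p}(A,B):=\sum_x r_{A\pm B}^{1+p}(x)\ll |A||B|^{1+p/2}, \] where the implied constant may depend on $p$.
   Context: A finite set $A=\{a_1<\dots<a_N\}\subset\mathbb{R}$ is convex if the gaps $a_{i+1}-a_i$ form a strictly monotone sequence. $r_{A\pm B}(x)$ is the number of pairs $(a,b)\in A\times B$ with $a\pm b=x$. *)

theory Defs
  imports Complex_Main
begin

definition convex_set :: "real set \<Rightarrow> bool" where
  "convex_set A \<longleftrightarrow> finite A \<and>
     (let xs = sorted_list_of_set A; N = length xs;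
          d = (\<lambda>i. xs ! Suc i - xs ! i)
      in (\<forall>i j. i < j \<and> Suc j < N \<longrightarrow> d i < d j) \<or>
         (\<forall>i j. i < j \<and> Suc j < N \<longrightarrow> d i > d j))"

definition r_plus :: "real set \<Rightarrow> real set \<Rightarrow> real \<Rightarrow> nat" where
  "r_plus A B x = card {(a, b). a \<in> A \<and> b \<in> B \<and> a + b = x}"

definition r_minus :: "real set \<Rightarrow> real set \<Rightarrow> real \<Rightarrow> nat" where
  "r_minus A B x = card {(a, b). a \<in> A \<and> b \<in> B \<and> a - b = x}"

text \<open>Additive energies E_q over all x (only x in the sum/difference set contribute).\<close>
definition E_plus :: "real \<Rightarrow> real set \<Rightarrow> real set \<Rightarrow> real" where
  "E_plus q A B = (\<Sum>x \<in> (\<lambda>(a, b). a + b) ` (A \<times> B). real (r_plus A B x) powr q)"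

definition E_minus :: "real \<Rightarrow> real set \<Rightarrow> real set \<Rightarrow> real" where
  "E_minus q A B = (\<Sum>x \<in> (\<lambda>(a, b). a - b) ` (A \<times> B). real (r_minus A B x) powr q)"

end

theory Submission
  imports Defs "HOL-Analysis.Harmonic_Numbers"
begin

text \<open>Fix x with \<open>r\<^sub>A\<^sub>-\<^sub>B(x) \<ge> \<tau>\<close> and list the elements a of A with \<open>a - x \<in> B\<close> in increasing
order. The index gaps in A of consecutive elements of this list sum to at most |A|, and the numbers
of elements of B in the intervals \<open>(a - x, a' - x]\<close> between consecutive ones sum to at most |B|;
so at least \<open>\<tau>/4\<close> consecutive pairs are short: index gap \<open>k \<le> 4|A|/\<tau>\<close> and \<open>l \<le> 4|B|/\<tau>\<close> elements
of B in between. Such a pair, together with x, is determined by \<open>(a - x, k, l)\<close>: the count l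
locates \<open>a' - x\<close> in B, so \<open>a' - a\<close> is known, and since A is convex, two elements at index distance
k are determined by their difference. Hence \<open>|{x. r(x) \<ge> \<tau>}| \<tau>\<^sup>3 \<le> 64 |A| |B|\<^sup>2\<close>. Summing
this over the level sets, together with the trivial bound \<open>\<tau> |{x. r(x) \<ge> \<tau>}| \<le> |A| |B|\<close> for
small \<open>\<tau>\<close>, gives both energy bounds; the case A + B is A - (-B).\<close>

lemma sum_powr_eq_sum_level_sets:
  fixes r :: "'a \<Rightarrow> nat"
  assumes "finite D" "\<And>x. x \<in> D \<Longrightarrow> r x \<le> R" "q > 0"
  shows "(\<Sum>x\<in>D. real (r x) powr q) =
    (\<Sum>s\<in>{1..R}. (real s powr q - real (s - 1) powr q) * real (card {x\<in>D. s \<le> r x}))"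
proof -
  define w where "w s = real s powr q - real (s - 1) powr q" for s
  have telescope: "real (r x) powr q = (\<Sum>s\<in>{1..R}. if s \<le> r x then w s else 0)" if "x \<in> D" for x
  proof -
    have "(\<Sum>s\<in>{1..R}. if s \<le> r x then w s else 0) = (\<Sum>s\<in>{s\<in>{1..R}. s \<le> r x}. w s)"
      by (rule sum.inter_filter[symmetric]) simp
    also have "{s\<in>{1..R}. s \<le> r x} = {Suc 0..r x}" using assms(2)[OF that] by auto
    also have "(\<Sum>s\<in>{Suc 0..r x}. w s) = real (r x) powr q - real 0 powr q"
      unfolding w_def by (rule sum_telescope'') simp
    finally show ?thesis by simp
  qed
  have "(\<Sum>x\<in>D. real (r x) powr q) = (\<Sum>x\<in>D. \<Sum>s\<in>{1..R}. if s \<le> r x then w s else 0)"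
    using telescope by (rule sum.cong[OF refl])
  also have "\<dots> = (\<Sum>s\<in>{1..R}. \<Sum>x\<in>D. if s \<le> r x then w s else 0)" by (rule sum.swap)
  also have "\<dots> = (\<Sum>s\<in>{1..R}. w s * real (card {x\<in>D. s \<le> r x}))"
    using assms(1) by (simp add: sum.inter_filter[symmetric] mult.commute)
  finally show ?thesis unfolding w_def .
qed

lemma powr_diff_pred_le:
  fixes q :: real
  assumes "1 \<le> q" "1 \<le> s"
  shows "real s powr q - real (s - 1) powr q \<le> q * real s powr (q - 1)"
proof (cases "s = 1")
  case True then show ?thesis using assms by simp
next
  case False
  then have s2: "real s - 1 \<ge> 1" using assms by auto
  have "\<exists>z>real s - 1. z < real s \<and>
      real s powr q - (real s - 1) powr q = (real s - (real s - 1)) * (q * z powr (q - 1))"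
    using s2 by (intro MVT2) (auto intro!: derivative_eq_intros)
  then obtain z where z: "z > real s - 1" "z < real s"
    "real s powr q - (real s - 1) powr q = q * z powr (q - 1)" by auto
  have "z powr (q - 1) \<le> real s powr (q - 1)" using z s2 assms by (intro powr_mono2) auto
  then show ?thesis using z assms by (simp add: of_nat_diff)
qed

lemma powr_minus_diff_ge:
  fixes a y :: real
  assumes "a > 0" "y \<ge> 1"
  shows "a * (y + 1) powr (- a - 1) \<le> y powr (- a) - (y + 1) powr (- a)"
proof -
  have "\<exists>z>y. z < y + 1 \<and> (y + 1) powr (- a) - y powr (- a) = (y + 1 - y) * (- a * z powr (- a - 1))"
    using assms by (intro MVT2) (auto intro!: derivative_eq_intros)
  then obtain z where z: "z > y" "z < y + 1"
    "(y + 1) powr (- a) - y powr (- a) = - a * z powr (- a - 1)" by auto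
  have "(y + 1) powr (- a - 1) \<le> z powr (- a - 1)" using z assms by (intro powr_mono2') auto
  then have "a * (y + 1) powr (- a - 1) \<le> a * z powr (- a - 1)"
    using assms by (intro mult_left_mono) auto
  then show ?thesis using z by linarith
qed

lemma sum_powr_tail_le:
  fixes a :: real
  assumes "a > 0" "1 \<le> S"
  shows "(\<Sum>s\<in>{S<..n}. real s powr (- a - 1)) \<le> real S powr (- a) / a"
proof (cases "S \<le> n")
  case True
  define g where "g s = - (real s powr (- a))" for s
  have "a * (\<Sum>s\<in>{S<..n}. real s powr (- a - 1)) = (\<Sum>s\<in>{S<..n}. a * real s powr (- a - 1))"
    by (rule sum_distrib_left)
  also have "\<dots> \<le> (\<Sum>s\<in>{S<..n}. g s - g (s - 1))"
  proof (rule sum_mono)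
    fix s assume "s \<in> {S<..n}"
    then show "a * real s powr (- a - 1) \<le> g s - g (s - 1)"
      using powr_minus_diff_ge[OF assms(1), of "real (s - 1)"] assms(2)
      by (simp add: g_def of_nat_diff)
  qed
  also have "\<dots> = g n - g S"
    using sum_telescope''[OF True, of g] by (simp add: atLeastSucAtMost_greaterThanAtMost)
  also have "\<dots> \<le> real S powr (- a)" by (simp add: g_def)
  finally show ?thesis using assms(1) by (simp add: pos_le_divide_eq mult.commute)
next
  case False
  then show ?thesis using assms(1) by simp
qed

lemma harm_le_one_plus_ln:
  assumes "n > 0"
  shows "harm n \<le> 1 + ln (real n)"
  using euler_mascheroni_sequence_decreasing[of 1 n] assms by (simp add: harm_def)

lemma card_above_threshold_mult_le_sum:
  fixes f :: "'a \<Rightarrow> real"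
  assumes "finite J" "\<And>j. j \<in> J \<Longrightarrow> 0 \<le> f j"
  shows "real (card {j\<in>J. K < f j}) * K \<le> (\<Sum>j\<in>J. f j)"
proof -
  have "real (card {j\<in>J. K < f j}) * K = (\<Sum>j\<in>{j\<in>J. K < f j}. K)" by simp
  also have "\<dots> \<le> (\<Sum>j\<in>{j\<in>J. K < f j}. f j)" by (rule sum_mono) simp
  also have "\<dots> \<le> (\<Sum>j\<in>J. f j)" by (rule sum_mono2) (use assms in auto)
  finally show ?thesis .
qed

lemma card_below_thresholds_ge:
  fixes f g :: "'a \<Rightarrow> real"
  assumes "finite J" "\<And>j. j \<in> J \<Longrightarrow> 0 \<le> f j" "\<And>j. j \<in> J \<Longrightarrow> 0 \<le> g j" "K > 0" "L > 0"
  shows "real (card J) - (\<Sum>j\<in>J. f j) / K - (\<Sum>j\<in>J. g j) / L \<le> real (card {j\<in>J. f j \<le> K \<and> g j \<le> L})"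
proof -
  have "{j\<in>J. f j \<le> K \<and> g j \<le> L} = J - ({j\<in>J. K < f j} \<union> {j\<in>J. L < g j})" by auto
  then have "card J - card ({j\<in>J. K < f j} \<union> {j\<in>J. L < g j}) \<le> card {j\<in>J. f j \<le> K \<and> g j \<le> L}"
    using diff_card_le_card_Diff[of "{j\<in>J. K < f j} \<union> {j\<in>J. L < g j}" J] assms(1) by auto
  then have "card J \<le> card {j\<in>J. f j \<le> K \<and> g j \<le> L} + card {j\<in>J. K < f j} + card {j\<in>J. L < g j}"
    using card_Un_le[of "{j\<in>J. K < f j}" "{j\<in>J. L < g j}"] by linarith
  moreover have "real (card {j\<in>J. K < f j}) \<le> (\<Sum>j\<in>J. f j) / K"
    using card_above_threshold_mult_le_sum[OF assms(1,2)] assms(4) by (simp add: pos_le_divide_eq)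
  moreover have "real (card {j\<in>J. L < g j}) \<le> (\<Sum>j\<in>J. g j) / L"
    using card_above_threshold_mult_le_sum[OF assms(1,3)] assms(5) by (simp add: pos_le_divide_eq)
  ultimately show ?thesis by linarith
qed

lemma sum_card_consecutive_Ioc_le:
  fixes f :: "nat \<Rightarrow> 'a::linorder"
  assumes "finite S" and mono: "\<And>i j. i < j \<Longrightarrow> j < t \<Longrightarrow> f i < f j"
  shows "(\<Sum>j<t - 1. card (S \<inter> {f j<..f (Suc j)})) \<le> card S"
proof -
  have le: "f (Suc i) \<le> f j" if "i < j" "j < t" for i j
    using mono[of "Suc i" j] that by (cases "Suc i = j") auto
  have "(\<Sum>j<t - 1. card (S \<inter> {f j<..f (Suc j)})) = card (\<Union>j<t - 1. S \<inter> {f j<..f (Suc j)})"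
  proof (rule card_UN_disjoint[symmetric])
    have disj: "S \<inter> {f i<..f (Suc i)} \<inter> (S \<inter> {f j<..f (Suc j)}) = {}" if "i < j" "j < t" for i j
      using le[OF that] by auto
    show "\<forall>i\<in>{..<t - 1}. \<forall>j\<in>{..<t - 1}. i \<noteq> j \<longrightarrow>
        S \<inter> {f i<..f (Suc i)} \<inter> (S \<inter> {f j<..f (Suc j)}) = {}"
    proof (intro ballI impI)
      fix i j assume "i \<in> {..<t - 1}" "j \<in> {..<t - 1}" "i \<noteq> j"
      then consider "i < j" "j < t" | "j < i" "i < t" by fastforce
      then show "S \<inter> {f i<..f (Suc i)} \<inter> (S \<inter> {f j<..f (Suc j)}) = {}"
        by cases (use disj in blast)+
    qed
  qed (use assms(1) in auto)
  also have "\<dots> \<le> card S" by (rule card_mono) (use assms(1) in auto)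
  finally show ?thesis .
qed

lemma sum_sorted_list_gaps_le:
  fixes I :: "nat set"
  assumes "I \<subseteq> {..<n}"
  shows "(\<Sum>j<card I - 1. sorted_list_of_set I ! Suc j - sorted_list_of_set I ! j) \<le> n"
proof -
  define js where "js = sorted_list_of_set I"
  have "finite I" by (rule finite_subset[OF assms]) simp
  then have len: "length js = card I" and "set js = I" unfolding js_def by auto
  have js_lt: "js ! j < n" if "j < card I" for j
    using nth_mem[of j js] that len \<open>set js = I\<close> assms by auto
  have js_strict: "js ! i < js ! j" if "i < j" "j < card I" for i j
    using sorted_wrt_nth_less[OF strict_sorted_list_of_set[of I], of i j] that len unfolding js_def by simp
  have "(\<Sum>j<card I - 1. js ! Suc j - js ! j) = (\<Sum>j<card I - 1. card ({..<n} \<inter> {js ! j<..js ! Suc j}))"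
  proof (rule sum.cong[OF refl])
    fix j assume "j \<in> {..<card I - 1}"
    then have "{js ! j<..js ! Suc j} \<subseteq> {..<n}" using js_lt[of "Suc j"] by fastforce
    then show "js ! Suc j - js ! j = card ({..<n} \<inter> {js ! j<..js ! Suc j})" by (simp add: Int_absorb1)
  qed
  also have "\<dots> \<le> n" using sum_card_consecutive_Ioc_le[of "{..<n}" "card I" "(!) js"] js_strict by simp
  finally show ?thesis unfolding js_def .
qed

lemma card_Ioc_eq_imp_eq:
  fixes B :: "'a::linorder set"
  assumes "finite B" "d \<in> B" "d' \<in> B" "c < d" "c < d'"
    and "card (B \<inter> {c<..d}) = card (B \<inter> {c<..d'})"
  shows "d = d'"
proof -
  have strict: "card (B \<inter> {c<..e}) < card (B \<inter> {c<..e'})" if "e' \<in> B" "c < e'" "e < e'" for e e'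
  proof (rule psubset_card_mono)
    have "e' \<in> B \<inter> {c<..e'}" "e' \<notin> B \<inter> {c<..e}" using that by auto
    then show "B \<inter> {c<..e} \<subset> B \<inter> {c<..e'}" using that by auto
  qed (use assms(1) in auto)
  show ?thesis
    using strict[of d' d] strict[of d d'] assms by (cases d d' rule: linorder_cases) auto
qed

lemma convex_set_nth_diff_inj:
  assumes "convex_set A" "0 < k" "i + k < card A" "i' + k < card A"
    and "sorted_list_of_set A ! (i + k) - sorted_list_of_set A ! i
       = sorted_list_of_set A ! (i' + k) - sorted_list_of_set A ! i'"
  shows "i = i'"
proof -
  define xs where "xs = sorted_list_of_set A"
  define d where "d i = xs ! Suc i - xs ! i" for i
  have "finite A" using assms(1) unfolding convex_set_def by simp
  then have len: "length xs = card A" unfolding xs_def by simp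
  have mono: "(\<forall>i j. i < j \<and> Suc j < length xs \<longrightarrow> d i < d j) \<or>
      (\<forall>i j. i < j \<and> Suc j < length xs \<longrightarrow> d i > d j)"
    using assms(1) unfolding convex_set_def xs_def d_def Let_def by simp
  define S where "S i = (\<Sum>s<k. d (i + s))" for i
  have S_eq: "S i = xs ! (i + k) - xs ! i" for i
    using sum_lessThan_telescope[of "\<lambda>s. xs ! (i + s)" k] by (simp add: S_def d_def)
  \<comment> \<open>A sum of k consecutive gaps is strictly monotone in its starting point.\<close>
  have S_ne: "S j \<noteq> S j'" if "j < j'" "j' + k < length xs" for j j'
  proof -
    have ne: "{..<k} \<noteq> {}" using assms(2) by auto
    from mono show ?thesis
    proof
      assume "\<forall>i j. i < j \<and> Suc j < length xs \<longrightarrow> d i < d j"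
      then have "S j < S j'" unfolding S_def by (intro sum_strict_mono[OF _ ne]) (use that in auto)
      then show ?thesis by simp
    next
      assume "\<forall>i j. i < j \<and> Suc j < length xs \<longrightarrow> d i > d j"
      then have "S j' < S j" unfolding S_def by (intro sum_strict_mono[OF _ ne]) (use that in auto)
      then show ?thesis by simp
    qed
  qed
  have "S i = S i'" using assms(5) by (simp add: S_eq xs_def)
  then show ?thesis using S_ne[of i i'] S_ne[of i' i] assms(3,4) len by (cases i i' rule: linorder_cases) auto
qed

lemma r_minus_eq_card_indices:
  assumes "finite A"
  shows "r_minus A B x =
    card {i. i < card A \<and> sorted_list_of_set A ! i - x \<in> B}"
proof -
  define xs where "xs = sorted_list_of_set A"
  have xs: "length xs = card A" "set xs = A" "distinct xs" unfolding xs_def using assms by auto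
  have "r_minus A B x = card (fst ` {(a, b). a \<in> A \<and> b \<in> B \<and> a - b = x})"
    unfolding r_minus_def by (rule card_image[symmetric]) (auto simp: inj_on_def)
  also have "fst ` {(a, b). a \<in> A \<and> b \<in> B \<and> a - b = x} = {a \<in> A. a - x \<in> B}"
  proof (intro set_eqI iffI)
    fix a assume "a \<in> {a \<in> A. a - x \<in> B}"
    then have "(a, a - x) \<in> {(a, b). a \<in> A \<and> b \<in> B \<and> a - b = x}" by simp
    then show "a \<in> fst ` {(a, b). a \<in> A \<and> b \<in> B \<and> a - b = x}" by (rule rev_image_eqI) simp
  qed (auto simp: algebra_simps)
  also have "\<dots> = (!) xs ` {i. i < card A \<and> xs ! i - x \<in> B}"
    using xs by (auto simp: in_set_conv_nth)
  also have "card \<dots> = card {i. i < card A \<and> xs ! i - x \<in> B}"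
    by (rule card_image) (use xs in \<open>auto simp: inj_on_def nth_eq_iff_index_eq\<close>)
  finally show ?thesis unfolding xs_def .
qed

lemma r_minus_le_card:
  assumes "finite A"
  shows "r_minus A B x \<le> card A"
  unfolding r_minus_eq_card_indices[OF assms] by (rule card_mono[of "{..<card A}", THEN order.trans]) auto

lemma r_minus_nonzero_imp_mem_differences:
  assumes "r_minus A B x \<noteq> 0"
  shows "x \<in> (\<lambda>(a, b). a - b) ` (A \<times> B)"
proof -
  have "{(a, b). a \<in> A \<and> b \<in> B \<and> a - b = x} \<noteq> {}"
    using assms unfolding r_minus_def by (intro notI) simp
  then show ?thesis by force
qed

lemma sum_r_minus:
  assumes "finite A" "finite B"
  shows "(\<Sum>x\<in>(\<lambda>(a, b). a - b) ` (A \<times> B). r_minus A B x) = card A * card B"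
proof -
  have "card (A \<times> B) = (\<Sum>z\<in>A \<times> B. 1)" by simp
  also have "\<dots> = (\<Sum>y\<in>(\<lambda>(a, b). a - b) ` (A \<times> B). \<Sum>z\<in>{z \<in> A \<times> B. (\<lambda>(a, b). a - b) z = y}. 1)"
    by (rule sum.image_gen) (use assms in simp)
  also have "\<dots> = (\<Sum>y\<in>(\<lambda>(a, b). a - b) ` (A \<times> B). r_minus A B y)"
  proof (rule sum.cong[OF refl])
    fix y
    have "{z \<in> A \<times> B. (\<lambda>(a, b). a - b) z = y} = {(a, b). a \<in> A \<and> b \<in> B \<and> a - b = y}" by auto
    then show "(\<Sum>z\<in>{z \<in> A \<times> B. (\<lambda>(a, b). a - b) z = y}. 1) = r_minus A B y"
      by (simp add: r_minus_def)
  qed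
  finally show ?thesis by (simp add: card_cartesian_product)
qed

lemma r_minus_level_set_subset:
  assumes "\<tau> > 0"
  shows "{x. \<tau> \<le> real (r_minus A B x)} \<subseteq> (\<lambda>(a, b). a - b) ` (A \<times> B)"
proof
  fix x assume "x \<in> {x. \<tau> \<le> real (r_minus A B x)}"
  then have "r_minus A B x \<noteq> 0" using assms by auto
  then show "x \<in> (\<lambda>(a, b). a - b) ` (A \<times> B)" by (rule r_minus_nonzero_imp_mem_differences)
qed

lemma finite_r_minus_level_set:
  assumes "finite A" "finite B" "\<tau> > 0"
  shows "finite {x. \<tau> \<le> real (r_minus A B x)}"
  using r_minus_level_set_subset[OF assms(3), of A B] by (rule finite_subset) (simp add: assms(1,2))

lemma r_minus_level_set_card_le:
  assumes "finite A" "finite B" "\<tau> > 0"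
  shows "\<tau> * real (card {x. \<tau> \<le> real (r_minus A B x)}) \<le> real (card A) * real (card B)"
proof -
  define D where "D = (\<lambda>(a, b). a - b) ` (A \<times> B)"
  define X where "X = {x. \<tau> \<le> real (r_minus A B x)}"
  have "X \<subseteq> D"
    using r_minus_level_set_subset[OF assms(3)] unfolding X_def D_def .
  have "\<tau> * real (card X) = (\<Sum>x\<in>X. \<tau>)" by simp
  also have "\<dots> \<le> (\<Sum>x\<in>X. real (r_minus A B x))" by (rule sum_mono) (simp add: X_def)
  also have "\<dots> \<le> (\<Sum>x\<in>D. real (r_minus A B x))"
    by (rule sum_mono2) (use \<open>X \<subseteq> D\<close> assms in \<open>auto simp: D_def\<close>)
  also have "\<dots> = real (card A) * real (card B)"
    using sum_r_minus[OF assms(1,2)] unfolding D_def by (simp flip: of_nat_sum of_nat_mult)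
  finally show ?thesis unfolding X_def .
qed

definition short_steps :: "real list \<Rightarrow> real set \<Rightarrow> real \<Rightarrow> real \<Rightarrow> real \<Rightarrow> (nat \<times> nat \<times> nat) set" where
  "short_steps xs B K L x = {(i, k, l). i + k < length xs \<and> xs ! i - x \<in> B \<and> xs ! (i + k) - x \<in> B \<and>
     0 < k \<and> real k \<le> K \<and> l = card (B \<inter> {xs ! i - x<..xs ! (i + k) - x}) \<and> 0 < l \<and> real l \<le> L}"

lemma finite_short_steps:
  assumes "finite B"
  shows "finite (short_steps xs B K L x)"
proof (rule finite_subset)
  show "short_steps xs B K L x \<subseteq> {..<length xs} \<times> {..<length xs} \<times> {..card B}"
    using assms by (auto simp: short_steps_def intro!: card_mono)
qed simp

lemma short_stepsI:
  assumes "sorted_wrt (<) xs" "finite B" "i < i'" "i' < length xs" "xs ! i - x \<in> B" "xs ! i' - x \<in> B"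
    and "real (i' - i) \<le> K" "real (card (B \<inter> {xs ! i - x<..xs ! i' - x})) \<le> L"
  shows "(i, i' - i, card (B \<inter> {xs ! i - x<..xs ! i' - x})) \<in> short_steps xs B K L x"
proof -
  have "xs ! i < xs ! i'" using sorted_wrt_nth_less[OF assms(1,3,4)] .
  then have "xs ! i' - x \<in> B \<inter> {xs ! i - x<..xs ! i' - x}" using assms(6) by simp
  then have "0 < card (B \<inter> {xs ! i - x<..xs ! i' - x})" using assms(2) by (auto simp: card_gt_0_iff)
  then show ?thesis using assms by (simp add: short_steps_def)
qed

lemma card_Sigma_short_steps_le:
  assumes "convex_set A" "finite B" "0 \<le> K" "0 \<le> L"
  shows "real (card (SIGMA x:X. short_steps (sorted_list_of_set A) B K L x)) \<le> real (card B) * K * L"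
proof -
  define xs where "xs = sorted_list_of_set A"
  define G where "G = (SIGMA x:X. short_steps xs B K L x)"
  have "finite A" using assms(1) unfolding convex_set_def by simp
  then have len: "length xs = card A" unfolding xs_def by simp
  have strict: "xs ! i < xs ! j" if "i < j" "j < length xs" for i j
    using sorted_wrt_nth_less[OF strict_sorted_list_of_set that[unfolded xs_def]] unfolding xs_def .
  define f where "f = (\<lambda>(x::real, i, k::nat, l::nat). (xs ! i - x, k, l))"
  have "inj_on f G"
  proof (rule inj_onI)
    fix u v assume "u \<in> G" "v \<in> G" "f u = f v"
    then obtain x i k l x' i' where u: "u = (x, i, k, l)" and v: "v = (x', i', k, l)"
      and "xs ! i - x = xs ! i' - x'"
      and su: "(i, k, l) \<in> short_steps xs B K L x" and sv: "(i', k, l) \<in> short_steps xs B K L x'"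
      by (auto simp: f_def G_def)
    moreover have "xs ! (i + k) - x = xs ! (i' + k) - x'"
    proof (rule card_Ioc_eq_imp_eq[OF assms(2)])
      show "xs ! i - x < xs ! (i + k) - x" "xs ! i - x < xs ! (i' + k) - x'"
        using su sv strict[of i "i + k"] strict[of i' "i' + k"] \<open>xs ! i - x = xs ! i' - x'\<close>
        by (auto simp: short_steps_def)
    qed (use su sv \<open>xs ! i - x = xs ! i' - x'\<close> in \<open>auto simp: short_steps_def\<close>)
    ultimately have "i = i'"
      using convex_set_nth_diff_inj[OF assms(1), of k i i'] by (auto simp: short_steps_def xs_def len)
    then show "u = v" using u v \<open>xs ! i - x = xs ! i' - x'\<close> by simp
  qed
  moreover have "f ` G \<subseteq> B \<times> {1..nat \<lfloor>K\<rfloor>} \<times> {1..nat \<lfloor>L\<rfloor>}"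
    by (auto simp: f_def G_def short_steps_def le_nat_floor)
  ultimately have "card G \<le> card (B \<times> {1..nat \<lfloor>K\<rfloor>} \<times> {1..nat \<lfloor>L\<rfloor>})"
    by (rule card_inj_on_le) (simp add: assms(2))
  then have "real (card G) \<le> real (card B) * real (nat \<lfloor>K\<rfloor>) * real (nat \<lfloor>L\<rfloor>)"
    by (simp add: card_cartesian_product flip: of_nat_mult)
  also have "\<dots> \<le> real (card B) * K * L"
    using assms(3,4) by (intro mult_mono) auto
  finally show ?thesis unfolding G_def xs_def .
qed

lemma card_short_steps_ge:
  assumes xs: "sorted_wrt (<) xs" and "finite B" "K > 0" "L > 0"
  shows "real (card {i. i < length xs \<and> xs ! i - x \<in> B}) - 1 - real (length xs) / K - real (card B) / L
    \<le> real (card (short_steps xs B K L x))"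
proof -
  define n where "n = length xs"
  define I where "I = {i. i < n \<and> xs ! i - x \<in> B}"
  define js where "js = sorted_list_of_set I"
  define t where "t = length js"
  have "finite I" unfolding I_def by simp
  then have t: "t = card I" and js_set: "set js = I" unfolding js_def t_def by auto
  have js_in: "js ! j < n" "xs ! (js ! j) - x \<in> B" if "j < t" for j
    using nth_mem[of j js] that js_set unfolding t_def I_def by auto
  have js_strict: "js ! i < js ! j" if "i < j" "j < t" for i j
    using sorted_wrt_nth_less[OF strict_sorted_list_of_set that[unfolded t_def js_def]]
    unfolding js_def .
  define c where "c j = xs ! (js ! j) - x" for j
  have c_strict: "c i < c j" if "i < j" "j < t" for i j
    using sorted_wrt_nth_less[OF xs js_strict[OF that] js_in(1)[OF that(2), unfolded n_def]]
    unfolding c_def n_def by simp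
  define kk where "kk j = js ! Suc j - js ! j" for j
  define ll where "ll j = card (B \<inter> {c j<..c (Suc j)})" for j
  define J where "J = {..<t - 1}"
  have "(\<Sum>j\<in>J. kk j) \<le> n"
    using sum_sorted_list_gaps_le[of I n] t unfolding J_def kk_def js_def I_def by auto
  then have sum_kk: "(\<Sum>j\<in>J. real (kk j)) \<le> real n" by (simp flip: of_nat_sum)
  have "(\<Sum>j\<in>J. ll j) \<le> card B"
    unfolding J_def ll_def by (rule sum_card_consecutive_Ioc_le[OF assms(2)]) (rule c_strict)
  then have sum_ll: "(\<Sum>j\<in>J. real (ll j)) \<le> real (card B)" by (simp flip: of_nat_sum)
  define good where "good = {j\<in>J. real (kk j) \<le> K \<and> real (ll j) \<le> L}"
  have "real (card J) - (\<Sum>j\<in>J. real (kk j)) / K - (\<Sum>j\<in>J. real (ll j)) / L \<le> real (card good)"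
    unfolding good_def by (rule card_below_thresholds_ge) (use assms(3,4) in \<open>auto simp: J_def\<close>)
  moreover have "real t - 1 \<le> real (card J)" unfolding J_def by simp
  moreover have "(\<Sum>j\<in>J. real (kk j)) / K \<le> real n / K" "(\<Sum>j\<in>J. real (ll j)) / L \<le> real (card B) / L"
    using sum_kk sum_ll assms(3,4) by (simp_all add: divide_right_mono)
  ultimately have good: "real (card I) - 1 - real n / K - real (card B) / L \<le> real (card good)"
    using t by linarith
  define g where "g j = (js ! j, kk j, ll j)" for j
  have "inj_on g good"
  proof (rule inj_onI)
    fix i j assume "i \<in> good" "j \<in> good" "g i = g j"
    then have "js ! i = js ! j" "i < t" "j < t" unfolding g_def good_def J_def by auto
    then show "i = j" using js_strict[of i j] js_strict[of j i] by (cases i j rule: linorder_cases) auto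
  qed
  moreover have "g ` good \<subseteq> short_steps xs B K L x"
  proof
    fix z assume "z \<in> g ` good"
    then obtain j where j: "j \<in> good" "z = g j" by auto
    then have "Suc j < t" "real (kk j) \<le> K" "real (ll j) \<le> L" unfolding good_def J_def by auto
    then show "z \<in> short_steps xs B K L x"
      using short_stepsI[OF xs assms(2) js_strict[of j "Suc j"] js_in(1)[of "Suc j", unfolded n_def]
          js_in(2)[of j] js_in(2)[of "Suc j"]]
      unfolding j(2) g_def kk_def ll_def c_def by simp
  qed
  ultimately have "card good \<le> card (short_steps xs B K L x)"
    by (intro card_inj_on_le finite_short_steps assms(2))
  then show ?thesis using good unfolding I_def n_def by linarith
qed

lemma r_minus_level_set_cube_bound_large:
  assumes A: "convex_set A" and "finite B" "4 \<le> \<tau>"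
  shows "real (card {x. \<tau> \<le> real (r_minus A B x)}) * \<tau> ^ 3 \<le> 64 * card A * (card B)^2"
proof -
  define xs where "xs = sorted_list_of_set A"
  define X where "X = {x. \<tau> \<le> real (r_minus A B x)}"
  define n where "n = real (card A)"
  define m where "m = real (card B)"
  define K where "K = 4 * n / \<tau>"
  define L where "L = 4 * m / \<tau>"
  have "finite A" using A unfolding convex_set_def by simp
  have "finite X" unfolding X_def using finite_r_minus_level_set \<open>finite A\<close> assms(2,3) by simp
  show ?thesis
  proof (cases "X = {}")
    case False
    then obtain x0 where "\<tau> \<le> real (r_minus A B x0)" unfolding X_def by auto
    moreover from this have "B \<noteq> {}"
      using r_minus_nonzero_imp_mem_differences[of A B x0] assms(3) by auto
    ultimately have "\<tau> \<le> n" "0 < m"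
      using r_minus_le_card[OF \<open>finite A\<close>, of B x0] assms(2) unfolding n_def m_def
      by (auto simp: card_gt_0_iff)
    then have "0 < K" "0 < L" using assms(3) unfolding K_def L_def by auto
    have steps: "\<tau> / 4 \<le> real (card (short_steps xs B K L x))" if "x \<in> X" for x
    proof -
      have "\<tau> \<le> real (card {i. i < length xs \<and> xs ! i - x \<in> B})"
        using that r_minus_eq_card_indices[OF \<open>finite A\<close>, of B x] \<open>finite A\<close>
        unfolding X_def xs_def by simp
      moreover have "real (length xs) / K = \<tau> / 4" "real (card B) / L = \<tau> / 4"
        using \<open>\<tau> \<le> n\<close> \<open>0 < m\<close> assms(3) \<open>finite A\<close> unfolding K_def L_def n_def m_def xs_def
        by auto
      ultimately show ?thesis
        using card_short_steps_ge[OF _ assms(2) \<open>0 < K\<close> \<open>0 < L\<close>, of xs x] assms(3)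
        unfolding xs_def by (simp add: strict_sorted_list_of_set)
    qed
    have "real (card X) * (\<tau> / 4) = (\<Sum>x\<in>X. \<tau> / 4)" by simp
    also have "\<dots> \<le> (\<Sum>x\<in>X. real (card (short_steps xs B K L x)))" by (rule sum_mono) (rule steps)
    also have "\<dots> = real (card (SIGMA x:X. short_steps xs B K L x))"
      using card_SigmaI[OF \<open>finite X\<close>, of "short_steps xs B K L"] finite_short_steps[OF assms(2)]
      by simp
    also have "\<dots> \<le> m * K * L"
      using card_Sigma_short_steps_le[OF A assms(2)] \<open>0 < K\<close> \<open>0 < L\<close> unfolding xs_def m_def by simp
    also have "\<dots> = 16 * n * m ^ 2 / \<tau> ^ 2"
      unfolding K_def L_def by (simp add: power2_eq_square)
    finally have "real (card X) * (\<tau> / 4) * \<tau> ^ 2 \<le> 16 * n * m ^ 2"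
      using assms(3) by (simp add: pos_le_divide_eq)
    then show ?thesis unfolding X_def n_def m_def by (simp add: power2_eq_square power3_eq_cube)
  qed (simp add: X_def)
qed

lemma r_minus_level_set_cube_bound:
  assumes A: "convex_set A" and "finite B" "B \<noteq> {}" "\<tau> > 0"
  shows "real (card {x. \<tau> \<le> real (r_minus A B x)}) * \<tau> ^ 3 \<le> 64 * card A * (card B)^2"
proof (cases "4 \<le> \<tau>")
  case True
  then show ?thesis using r_minus_level_set_cube_bound_large[OF A assms(2)] by simp
next
  case False
  have "finite A" using A unfolding convex_set_def by simp
  have "1 \<le> real (card B)" using assms(2,3) by (simp add: Suc_leI card_gt_0_iff)
  have "\<tau> ^ 2 \<le> 4 ^ 2" using False assms(4) by (intro power_mono) auto
  then have "\<tau> ^ 2 \<le> 16 * real (card B)" using \<open>1 \<le> real (card B)\<close> by simp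
  have "real (card {x. \<tau> \<le> real (r_minus A B x)}) * \<tau> ^ 3
      = (\<tau> * real (card {x. \<tau> \<le> real (r_minus A B x)})) * \<tau> ^ 2"
    by (simp add: power2_eq_square power3_eq_cube)
  also have "\<dots> \<le> (real (card A) * real (card B)) * (16 * real (card B))"
    by (rule mult_mono[OF r_minus_level_set_card_le[OF \<open>finite A\<close> assms(2,4)] \<open>\<tau> ^ 2 \<le> 16 * real (card B)\<close>])
      auto
  also have "\<dots> \<le> 64 * real (card A) * real (card B) ^ 2"
    by (simp add: power2_eq_square)
  finally show ?thesis by simp
qed

lemma powr_mult_card_r_minus_level_set_le:
  fixes s S :: real
  assumes "finite A" "finite B" "1 \<le> p" "0 < s" "s \<le> S"
  shows "s powr p * real (card {x. s \<le> real (r_minus A B x)}) \<le> S powr (p - 1) * (card A * card B)"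
proof -
  have "s powr p * real (card {x. s \<le> real (r_minus A B x)})
      = s powr (p - 1) * (s * real (card {x. s \<le> real (r_minus A B x)}))"
    using assms(4) by (simp add: powr_diff)
  also have "\<dots> \<le> S powr (p - 1) * (card A * card B)"
    using r_minus_level_set_card_le[OF assms(1,2,4)] assms(3-5)
    by (intro mult_mono powr_mono2) auto
  finally show ?thesis .
qed

lemma powr_mult_card_r_minus_level_set_le_cube:
  fixes s :: real
  assumes "convex_set A" "finite B" "B \<noteq> {}" "0 < s"
  shows "s powr p * real (card {x. s \<le> real (r_minus A B x)}) \<le> 64 * card A * (card B)^2 * s powr (p - 3)"
proof -
  have "s powr p * real (card {x. s \<le> real (r_minus A B x)})
      = s powr (p - 3) * (real (card {x. s \<le> real (r_minus A B x)}) * s ^ 3)"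
    using assms(4) by (simp add: powr_diff powr_realpow)
  also have "\<dots> \<le> s powr (p - 3) * (64 * card A * (card B)^2)"
    using r_minus_level_set_cube_bound[OF assms] by (intro mult_left_mono) auto
  finally show ?thesis by (simp only: mult_ac)
qed

lemma E_minus_le_sum_level_sets:
  assumes "finite A" "finite B" "1 \<le> q"
  shows "E_minus q A B
    \<le> (\<Sum>s=1..card A. q * real s powr (q - 1) * real (card {x. real s \<le> real (r_minus A B x)}))"
proof -
  define D where "D = (\<lambda>(a, b). a - b) ` (A \<times> B)"
  have "E_minus q A B = (\<Sum>s=1..card A.
      (real s powr q - real (s - 1) powr q) * real (card {x\<in>D. s \<le> r_minus A B x}))"
    unfolding E_minus_def D_def[symmetric]
    by (rule sum_powr_eq_sum_level_sets) (use assms r_minus_le_card in \<open>auto simp: D_def\<close>)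
  also have "\<dots> \<le> (\<Sum>s=1..card A. q * real s powr (q - 1) * real (card {x. real s \<le> real (r_minus A B x)}))"
  proof (rule sum_mono)
    fix s :: nat assume "s \<in> {1..card A}"
    then have "{x\<in>D. s \<le> r_minus A B x} = {x. real s \<le> real (r_minus A B x)}"
      using r_minus_level_set_subset[of "real s" A B] unfolding D_def by auto
    moreover have "real s powr q - real (s - 1) powr q \<le> q * real s powr (q - 1)"
      using powr_diff_pred_le[OF assms(3), of s] \<open>s \<in> {1..card A}\<close> by simp
    ultimately show "(real s powr q - real (s - 1) powr q) * real (card {x\<in>D. s \<le> r_minus A B x})
        \<le> q * real s powr (q - 1) * real (card {x. real s \<le> real (r_minus A B x)})"
      by (simp add: mult_right_mono)
  qed
  finally show ?thesis .
qed

lemma E_minus_3_le: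
  assumes A: "convex_set A" and "2 \<le> card A" "finite B"
  shows "E_minus 3 A B \<le> 576 * card A * (card B)^2 * ln (card A)"
proof (cases "B = {}")
  case False
  define n where "n = card A"
  define m where "m = real (card B)"
  have "finite A" using A unfolding convex_set_def by simp
  have "E_minus 3 A B \<le> (\<Sum>s=1..n. 3 * real s powr 2 * real (card {x. real s \<le> real (r_minus A B x)}))"
    using E_minus_le_sum_level_sets[OF \<open>finite A\<close> assms(3), of 3] unfolding n_def by simp
  also have "\<dots> \<le> (\<Sum>s=1..n. 192 * real n * m ^ 2 * inverse (real s))"
  proof (rule sum_mono)
    fix s assume "s \<in> {1..n}"
    then have "real (card {x. real s \<le> real (r_minus A B x)}) * real s ^ 3 \<le> 64 * real n * m ^ 2"
      using r_minus_level_set_cube_bound[OF A assms(3) False, of "real s"] unfolding n_def m_def by simp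
    then show "3 * real s powr 2 * real (card {x. real s \<le> real (r_minus A B x)})
        \<le> 192 * real n * m ^ 2 * inverse (real s)"
      using \<open>s \<in> {1..n}\<close> by (simp add: field_simps power2_eq_square power3_eq_cube)
  qed
  also have "\<dots> = 192 * real n * m ^ 2 * harm n"
    by (simp add: harm_def sum_distrib_left)
  also have "\<dots> \<le> 192 * real n * m ^ 2 * (3 * ln (real n))"
  proof (rule mult_left_mono)
    have "ln 2 \<le> ln (real n)" using assms(2) unfolding n_def by simp
    moreover have "harm n \<le> 1 + ln (real n)" using harm_le_one_plus_ln[of n] assms(2) n_def by simp
    ultimately show "harm n \<le> 3 * ln (real n)" using ln2_ge_two_thirds by linarith
  qed simp
  finally show ?thesis unfolding n_def m_def by simp
qed (simp add: E_minus_def)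

lemma E_minus_powr_le_split:
  assumes A: "convex_set A" and "finite B" "1 < p" "p < 2" "1 \<le> S"
  shows "E_minus (1 + p) A B \<le> (1 + p) * card A * card B * real S powr p
    + (1 + p) * 64 * card A * (card B)^2 * real S powr (p - 2) / (2 - p)"
proof (cases "B = {}")
  case False
  define n where "n = real (card A)"
  define m where "m = real (card B)"
  define F where "F s = (1 + p) * (real s powr p * real (card {x. real s \<le> real (r_minus A B x)}))" for s
  have "finite A" using A unfolding convex_set_def by simp
  have F_small: "F s \<le> (1 + p) * real S powr (p - 1) * (n * m)" if "s \<in> {1..S}" for s
    using powr_mult_card_r_minus_level_set_le[OF \<open>finite A\<close> assms(2), of p "real s" "real S"] that assms(3)
    unfolding F_def n_def m_def by (simp add: mult.assoc mult_left_mono)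
  have F_large: "F s \<le> (1 + p) * 64 * n * m ^ 2 * real s powr (- (2 - p) - 1)" if "s \<in> {S<..}" for s
  proof -
    have "F s \<le> (1 + p) * (64 * n * m ^ 2 * real s powr (p - 3))"
      using powr_mult_card_r_minus_level_set_le_cube[OF A assms(2) False, of "real s" p] that assms(3,5)
      unfolding F_def n_def m_def by (intro mult_left_mono) auto
    moreover have "- (2 - p) - 1 = p - 3" by simp
    ultimately show ?thesis by (simp only: mult_ac)
  qed
  have "E_minus (1 + p) A B \<le> (\<Sum>s=1..card A. F s)"
    using E_minus_le_sum_level_sets[OF \<open>finite A\<close> assms(2), of "1 + p"] assms(3)
    by (simp add: F_def mult.assoc)
  also have "\<dots> \<le> (\<Sum>s\<in>{1..S} \<union> {S<..card A}. F s)"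
    by (rule sum_mono2) (use assms(3) in \<open>auto simp: F_def\<close>)
  also have "\<dots> = (\<Sum>s=1..S. F s) + (\<Sum>s\<in>{S<..card A}. F s)"
    by (rule sum.union_disjoint) auto
  also have "\<dots> \<le> (\<Sum>s=1..S. (1 + p) * real S powr (p - 1) * (n * m))
      + (\<Sum>s\<in>{S<..card A}. (1 + p) * 64 * n * m ^ 2 * real s powr (- (2 - p) - 1))"
    using F_small F_large by (intro add_mono sum_mono) auto
  also have "\<dots> \<le> (1 + p) * n * m * real S powr p
      + (1 + p) * 64 * n * m ^ 2 * (real S powr (- (2 - p)) / (2 - p))"
  proof (intro add_mono)
    show "(\<Sum>s=1..S. (1 + p) * real S powr (p - 1) * (n * m)) \<le> (1 + p) * n * m * real S powr p"
      using assms(5) by (simp add: powr_diff field_simps)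
    show "(\<Sum>s\<in>{S<..card A}. (1 + p) * 64 * n * m ^ 2 * real s powr (- (2 - p) - 1))
        \<le> (1 + p) * 64 * n * m ^ 2 * (real S powr (- (2 - p)) / (2 - p))"
      using mult_left_mono[OF sum_powr_tail_le[of "2 - p" S "card A"], of "(1 + p) * 64 * n * m ^ 2"]
        assms(3-5)
      by (simp add: sum_distrib_left n_def m_def)
  qed
  finally show ?thesis by (simp add: n_def m_def)
qed (simp add: E_minus_def)

lemma nat_floor_sqrt_powr_le:
  fixes m e :: real
  assumes "1 \<le> m" "0 \<le> e"
  shows "real (nat \<lfloor>sqrt m\<rfloor>) powr e \<le> m powr (e / 2)"
proof -
  have "real (nat \<lfloor>sqrt m\<rfloor>) powr e \<le> sqrt m powr e"
    using assms by (intro powr_mono2) auto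
  also have "\<dots> = m powr (e / 2)" using assms(1) by (simp add: powr_half_sqrt[symmetric] powr_powr)
  finally show ?thesis .
qed

lemma nat_floor_sqrt_powr_neg_le:
  fixes m e :: real
  assumes "1 \<le> m" "- 1 \<le> e" "e \<le> 0"
  shows "real (nat \<lfloor>sqrt m\<rfloor>) powr e \<le> 2 * m powr (e / 2)"
proof -
  have "1 \<le> sqrt m" using assms(1) by simp
  then have "sqrt m - 1 < real (nat \<lfloor>sqrt m\<rfloor>)" "1 \<le> real (nat \<lfloor>sqrt m\<rfloor>)"
    by (linarith, simp add: le_nat_floor)
  then have "sqrt m / 2 \<le> real (nat \<lfloor>sqrt m\<rfloor>)" by linarith
  then have "real (nat \<lfloor>sqrt m\<rfloor>) powr e \<le> (sqrt m / 2) powr e"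
    using \<open>1 \<le> sqrt m\<close> assms(3) by (intro powr_mono2') auto
  also have "\<dots> = m powr (e / 2) * 2 powr (- e)"
  proof -
    have "(sqrt m / 2) powr e = sqrt m powr e / 2 powr e"
      by (rule powr_divide)
    moreover have "sqrt m powr e = m powr (e / 2)"
      using assms(1) by (simp add: powr_half_sqrt[symmetric] powr_powr)
    moreover have "(2::real) powr (- e) = 1 / 2 powr e"
      by (rule powr_minus_divide)
    ultimately show ?thesis by simp
  qed
  also have "\<dots> \<le> m powr (e / 2) * 2"
    using powr_mono[of "- e" 1 2] assms(2) by (intro mult_left_mono) auto
  finally show ?thesis by simp
qed

lemma E_minus_powr_le:
  assumes A: "convex_set A" and "finite B" "1 < p" "p < 2"
  shows "E_minus (1 + p) A B \<le> 3 * (1 + 128 / (2 - p)) * card A * real (card B) powr (1 + p / 2)"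
proof (cases "B = {}")
  case False
  define n where "n = real (card A)"
  define m where "m = real (card B)"
  define S where "S = nat \<lfloor>sqrt m\<rfloor>"
  have "1 \<le> m" unfolding m_def using assms(2) False by (simp add: Suc_leI card_gt_0_iff)
  then have "1 \<le> S" unfolding S_def by (simp add: le_nat_floor)
  have S_p: "real S powr p \<le> m powr (p / 2)"
    using nat_floor_sqrt_powr_le[OF \<open>1 \<le> m\<close>, of p] assms(3) unfolding S_def by simp
  have S_p2: "real S powr (p - 2) \<le> 2 * m powr ((p - 2) / 2)"
    using nat_floor_sqrt_powr_neg_le[OF \<open>1 \<le> m\<close>, of "p - 2"] assms(3,4) unfolding S_def by simp
  have "E_minus (1 + p) A B \<le> (1 + p) * n * m * real S powr p
      + (1 + p) * 64 * n * m ^ 2 * real S powr (p - 2) / (2 - p)"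
    using E_minus_powr_le_split[OF A assms(2-4) \<open>1 \<le> S\<close>] unfolding n_def m_def by simp
  also have "\<dots> \<le> (1 + p) * n * (m * m powr (p / 2))
      + (1 + p) * 128 * n / (2 - p) * (m ^ 2 * m powr ((p - 2) / 2))"
  proof (rule add_mono)
    show "(1 + p) * n * m * real S powr p \<le> (1 + p) * n * (m * m powr (p / 2))"
      using mult_left_mono[OF S_p, of "(1 + p) * n * m"] assms(3) \<open>1 \<le> m\<close>
      by (simp add: n_def mult.assoc)
    show "(1 + p) * 64 * n * m ^ 2 * real S powr (p - 2) / (2 - p)
        \<le> (1 + p) * 128 * n / (2 - p) * (m ^ 2 * m powr ((p - 2) / 2))"
    proof -
      have "(1 + p) * 64 * n * m ^ 2 * real S powr (p - 2) \<le> (1 + p) * 64 * n * m ^ 2 * (2 * m powr ((p - 2) / 2))"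
        using S_p2 assms(3) by (intro mult_left_mono) (auto simp: n_def)
      then have "(1 + p) * 64 * n * m ^ 2 * real S powr (p - 2) / (2 - p)
          \<le> (1 + p) * 64 * n * m ^ 2 * (2 * m powr ((p - 2) / 2)) / (2 - p)"
        using assms(4) by (intro divide_right_mono) auto
      also have "\<dots> = (1 + p) * 128 * n / (2 - p) * (m ^ 2 * m powr ((p - 2) / 2))"
        by (simp add: algebra_simps)
      finally show ?thesis .
    qed
  qed
  also have "m * m powr (p / 2) = m powr (1 + p / 2)"
    using \<open>1 \<le> m\<close> by (simp add: powr_add)
  also have "m ^ 2 * m powr ((p - 2) / 2) = m powr (1 + p / 2)"
  proof -
    have "m ^ 2 * m powr ((p - 2) / 2) = m powr (2 + (p - 2) / 2)"
      using \<open>1 \<le> m\<close> by (simp add: powr_add powr_realpow)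
    also have "2 + (p - 2) / 2 = 1 + p / 2" by (simp add: field_simps)
    finally show ?thesis .
  qed
  also have "(1 + p) * n * m powr (1 + p / 2) + (1 + p) * 128 * n / (2 - p) * m powr (1 + p / 2)
      = (1 + p) * (1 + 128 / (2 - p)) * n * m powr (1 + p / 2)"
    by (simp add: algebra_simps add_divide_distrib)
  also have "\<dots> \<le> 3 * (1 + 128 / (2 - p)) * n * m powr (1 + p / 2)"
    using assms(3,4) by (intro mult_right_mono) (auto simp: n_def)
  finally show ?thesis unfolding n_def m_def .
qed (simp add: E_minus_def)

lemma r_plus_eq_r_minus_uminus: "r_plus A B x = r_minus A (uminus ` B) x"
proof -
  have "{(a, b). a \<in> A \<and> b \<in> uminus ` B \<and> a - b = x}
      = (\<lambda>(a, b). (a, - b)) ` {(a, b). a \<in> A \<and> b \<in> B \<and> a + b = x}"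
    by (auto simp: image_iff)
  moreover have "inj_on (\<lambda>(a, b). (a, - b)) {(a, b). a \<in> A \<and> b \<in> B \<and> a + b = x}"
    by (auto simp: inj_on_def)
  ultimately show ?thesis unfolding r_plus_def r_minus_def by (simp add: card_image)
qed

lemma E_plus_eq_E_minus_uminus: "E_plus q A B = E_minus q A (uminus ` B)"
proof -
  have "(\<lambda>(a, b). a + b) ` (A \<times> B) = (\<lambda>(a, b). a - b) ` (A \<times> uminus ` B)"
    by (force simp: image_iff)
  then show ?thesis unfolding E_plus_def E_minus_def r_plus_eq_r_minus_uminus by simp
qed

lemma card_uminus_image: "card (uminus ` B) = card (B :: 'a::ab_group_add set)"
  by (rule card_image) (simp add: inj_on_def)

lemma E_plus_3_le:
  assumes "convex_set A" "2 \<le> card A" "finite B"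
  shows "E_plus 3 A B \<le> 576 * card A * (card B)^2 * ln (card A)"
  using E_minus_3_le[OF assms(1,2), of "uminus ` B"] assms(3)
  by (simp add: E_plus_eq_E_minus_uminus card_uminus_image)

lemma E_plus_powr_le:
  assumes "convex_set A" "finite B" "1 < p" "p < 2"
  shows "E_plus (1 + p) A B \<le> 3 * (1 + 128 / (2 - p)) * card A * real (card B) powr (1 + p / 2)"
  using E_minus_powr_le[OF assms(1) _ assms(3,4), of "uminus ` B"] assms(2)
  by (simp add: E_plus_eq_E_minus_uminus card_uminus_image)

theorem corollary3p1:
  shows "(\<exists>C::real>0. \<forall>A B. convex_set A \<and> card A \<ge> 2 \<and> finite B \<longrightarrow>
            E_plus 3 A B \<le> C * card A * (card B)^2 * ln (card A) \<and>
            E_minus 3 A B \<le> C * card A * (card B)^2 * ln (card A))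
       \<and> (\<forall>p::real. 1 < p \<and> p < 2 \<longrightarrow>
           (\<exists>C::real>0. \<forall>A B. convex_set A \<and> finite B \<longrightarrow>
              E_plus (1 + p) A B \<le> C * card A * real (card B) powr (1 + p / 2) \<and>
              E_minus (1 + p) A B \<le> C * card A * real (card B) powr (1 + p / 2)))"
proof (intro conjI allI impI)
  show "\<exists>C::real>0. \<forall>A B. convex_set A \<and> card A \<ge> 2 \<and> finite B \<longrightarrow>
      E_plus 3 A B \<le> C * card A * (card B)^2 * ln (card A) \<and>
      E_minus 3 A B \<le> C * card A * (card B)^2 * ln (card A)"
    using E_plus_3_le E_minus_3_le by (intro exI[of _ 576]) auto
next
  fix p :: real assume p: "1 < p \<and> p < 2"
  then have "0 < 3 * (1 + 128 / (2 - p))" by (simp add: add_pos_pos)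
  then show "\<exists>C::real>0. \<forall>A B. convex_set A \<and> finite B \<longrightarrow>
      E_plus (1 + p) A B \<le> C * card A * real (card B) powr (1 + p / 2) \<and>
      E_minus (1 + p) A B \<le> C * card A * real (card B) powr (1 + p / 2)"
    using E_plus_powr_le E_minus_powr_le p by (intro exI[of _ "3 * (1 + 128 / (2 - p))"]) auto
qed

end
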